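(* Let $p>1$ be an integer and let $u^{(p)}$ be the fixed point of the substitution $\varphi_p(L)=L^pS$, $\varphi_p(S)=M$, $\varphi_p(M)=L^{p-1}S$. Then $\mathrm{AC}(n)\ge 3$ for all $n\in\mathbb N$.
   Context: $u^{(p)}=\lim_{n\to\infty}\varphi_p^n(L)$. For a finite word $w$, its Parikh vector is $\Psi(w)=(|w|_L,|w|_S,|w|_M)$, where $|w|_a$ is the number of occurrences of $a$ in $w$. The Abelian complexity of $u^{(p)}$ is $\mathrm{AC}(n)=\#\{\Psi(w): w \text{ a factor of } u^{(p)} \text{ of length } n\}$. *)

theory Defs
  imports Main
begin

datatype letter = L | S | M

fun phi :: "nat \<Rightarrow> letter \<Rightarrow> letter list" where
  "phi p L = replicate p L @ [S]"
| "phi p S = [M]"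
| "phi p M = replicate (p - 1) L @ [S]"

definition phi_word :: "nat \<Rightarrow> letter list \<Rightarrow> letter list" where
  "phi_word p w = concat (map (phi p) w)"

definition phi_pow_L :: "nat \<Rightarrow> nat \<Rightarrow> letter list" where
  "phi_pow_L p n = (phi_word p ^^ n) [L]"

text \<open>The fixed point u^(p) = lim phi_p^n(L), as an infinite word nat => letter:
  the i-th letter is the letter that position i of phi_p^n(L) eventually
  (for all large n) carries.\<close>
definition u :: "nat \<Rightarrow> nat \<Rightarrow> letter" where
  "u p i = (THE a. \<exists>N. \<forall>n\<ge>N. i < length (phi_pow_L p n) \<and> phi_pow_L p n ! i = a)"

definition parikh :: "letter list \<Rightarrow> nat \<times> nat \<times> nat" where
  "parikh w = (count_list w L, count_list w S, count_list w M)"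

definition factor :: "nat \<Rightarrow> nat \<Rightarrow> nat \<Rightarrow> letter list" where
  "factor p i n = map (u p) [i..<i + n]"

definition AC :: "nat \<Rightarrow> nat \<Rightarrow> nat" where
  "AC p n = card {parikh (factor p i n) | i. True}"

end

theory Submission
  imports Defs
begin

text \<open>If some letter c occurred equally often in every factor of length n, the
  indicator of c in u would be n-periodic. Since phi(L) starts with LL, the prefix
  phi^(m+1)(L) starts with phi^m(L) phi^m(L), so every window of u below
  |phi^m(L)| repeats after |phi^m(L)| letters; together with n-periodicity this
  makes |phi^m(L)| a period as soon as it is at least n. Three consecutive lengths
  are coprime (they satisfy a recurrence with unit trailing coefficient), so the
  indicator would be constant, which is absurd because L, S and M all occur.
  Hence every letter count varies. Choosing i where the Parikh vector changes
  between positions i and i+1 and a letter c different from u(i) and u(i+n), the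
  count of c agrees at i and i+1 but differs at some j: three Parikh vectors.\<close>

definition phi_block :: "nat \<Rightarrow> nat \<Rightarrow> letter \<Rightarrow> letter list" where
  "phi_block p m x = (phi_word p ^^ m) [x]"

lemma phi_word_append: "phi_word p (xs @ ys) = phi_word p xs @ phi_word p ys"
  by (simp add: phi_word_def)

lemma phi_word_pow_append:
  "(phi_word p ^^ m) (xs @ ys) = (phi_word p ^^ m) xs @ (phi_word p ^^ m) ys"
  by (induction m) (simp_all add: phi_word_append)

lemma phi_word_pow_Nil: "(phi_word p ^^ m) [] = []"
  by (induction m) (simp_all add: phi_word_def)

lemma phi_word_pow_Cons: "(phi_word p ^^ m) (x # xs) = phi_block p m x @ (phi_word p ^^ m) xs"
  using phi_word_pow_append[where p=p and m=m and xs="[x]" and ys=xs] by (simp add: phi_block_def)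

lemma phi_word_pow_replicate:
  "(phi_word p ^^ m) (replicate k x) = concat (replicate k (phi_block p m x))"
  by (induction k) (simp_all add: phi_word_pow_Nil phi_word_pow_Cons)

lemma phi_block_0 [simp]: "phi_block p 0 x = [x]"
  by (simp add: phi_block_def)

lemma phi_block_Suc: "phi_block p (Suc m) x = (phi_word p ^^ m) (phi p x)"
  by (simp only: phi_block_def funpow_Suc_right comp_def) (simp add: phi_word_def)

lemma phi_block_Suc_L:
  "phi_block p (Suc m) L = concat (replicate p (phi_block p m L)) @ phi_block p m S"
  by (simp add: phi_block_Suc phi_word_pow_append phi_word_pow_replicate phi_word_pow_Cons
      phi_word_pow_Nil)

lemma phi_block_Suc_S: "phi_block p (Suc m) S = phi_block p m M"
  by (simp add: phi_block_Suc phi_word_pow_Cons phi_word_pow_Nil)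

lemma phi_block_Suc_M:
  "phi_block p (Suc m) M = concat (replicate (p - 1) (phi_block p m L)) @ phi_block p m S"
  by (simp add: phi_block_Suc phi_word_pow_append phi_word_pow_replicate phi_word_pow_Cons
      phi_word_pow_Nil)

lemma length_phi_block_Suc_L:
  "length (phi_block p (Suc m) L) = p * length (phi_block p m L) + length (phi_block p m S)"
  by (simp add: phi_block_Suc_L length_concat sum_list_replicate)

lemma length_phi_block_Suc_S: "length (phi_block p (Suc m) S) = length (phi_block p m M)"
  by (simp add: phi_block_Suc_S)

lemma length_phi_block_Suc_M:
  "length (phi_block p (Suc m) M) = (p - 1) * length (phi_block p m L) + length (phi_block p m S)"
  by (simp add: phi_block_Suc_M length_concat sum_list_replicate)

lemmas length_phi_block_Suc =
  length_phi_block_Suc_L length_phi_block_Suc_S length_phi_block_Suc_M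

lemma length_phi_block_pos: "length (phi_block p m x) \<ge> 1"
proof (induction m arbitrary: x)
  case 0
  then show ?case by simp
next
  case (Suc m)
  have "length (phi_block p m S) \<ge> 1" "length (phi_block p m M) \<ge> 1" using Suc by auto
  then show ?case
    by (cases x; simp only: length_phi_block_Suc; linarith)
qed

lemma length_phi_block_L_ge: "p \<ge> 1 \<Longrightarrow> length (phi_block p m L) \<ge> m + 1"
proof (induction m)
  case 0
  then show ?case by simp
next
  case (Suc m)
  have "length (phi_block p m S) \<ge> 1" by (rule length_phi_block_pos)
  moreover have "p * length (phi_block p m L) \<ge> length (phi_block p m L)" using Suc.prems by simp
  ultimately show ?case using Suc unfolding length_phi_block_Suc_L by linarith
qed

lemma length_phi_block_L_recurrence:
  assumes "p \<ge> 1"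
  shows "length (phi_block p (m + 3) L) + length (phi_block p m L)
       = p * length (phi_block p (m + 2) L) + length (phi_block p (m + 1) L)"
proof -
  have "(p - 1) * x + x = p * x" for x :: nat using assms by (cases p) auto
  from this[of "length (phi_block p m L)"] show ?thesis
    by (simp add: numeral_3_eq_3 numeral_2_eq_2 length_phi_block_Suc algebra_simps)
qed

lemma common_divisor_length_phi_block_L:
  assumes "p \<ge> 1"
    and "d dvd length (phi_block p m L)" "d dvd length (phi_block p (m + 1) L)"
    and "d dvd length (phi_block p (m + 2) L)"
  shows "d dvd 1"
  using assms(2-)
proof (induction m)
  case 0
  then show ?case by simp
next
  case (Suc m)
  have "d dvd length (phi_block p (m + 3) L) + length (phi_block p m L)"
    unfolding length_phi_block_L_recurrence[OF assms(1)] using Suc.prems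
    by (simp add: numeral_2_eq_2)
  moreover have "d dvd length (phi_block p (m + 3) L)"
    using Suc.prems by (simp add: numeral_3_eq_3 numeral_2_eq_2)
  ultimately have "d dvd length (phi_block p m L)" by (simp add: dvd_add_right_iff)
  with Suc show ?case by (simp add: numeral_2_eq_2)
qed

lemma gcd_length_phi_block_L:
  assumes "p \<ge> 1"
  shows "gcd (gcd (length (phi_block p m L)) (length (phi_block p (m + 1) L)))
           (length (phi_block p (m + 2) L)) = 1"
  by (rule common_divisor_length_phi_block_L[OF assms, where m=m, THEN nat_dvd_1_iff_1[THEN iffD1]])
    (meson gcd_dvd1 gcd_dvd2 dvd_trans)+

lemma phi_block_L_prefix:
  assumes "p \<ge> 1" "m \<le> k"
  shows "\<exists>r. phi_block p k L = phi_block p m L @ r"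
  using assms(2)
proof (induction k rule: dec_induct)
  case base
  then show ?case by simp
next
  case (step k)
  obtain q where "p = Suc q" using assms(1) by (cases p) auto
  then have "\<exists>r. phi_block p (Suc k) L = phi_block p k L @ r" by (simp add: phi_block_Suc_L)
  with step.IH show ?case by auto
qed

lemma phi_block_Suc_L_square_prefix:
  assumes "p \<ge> 2"
  shows "\<exists>r. phi_block p (Suc m) L = phi_block p m L @ phi_block p m L @ r"
proof -
  obtain q where "p = Suc (Suc q)" using assms by (cases p; cases "p - 1") auto
  then show ?thesis by (simp add: phi_block_Suc_L)
qed

lemma u_eq_nth_phi_block:
  assumes "p \<ge> 1" "i < length (phi_block p m L)"
  shows "u p i = phi_block p m L ! i"
proof -
  have phi_pow_L: "phi_pow_L p k = phi_block p k L" for k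
    by (simp add: phi_pow_L_def phi_block_def)
  have stable: "i < length (phi_block p k L) \<and> phi_block p k L ! i = phi_block p m L ! i"
    if km: "k \<ge> m" for k
  proof -
    obtain r where "phi_block p k L = phi_block p m L @ r"
      using phi_block_L_prefix[OF assms(1) km] by blast
    then show ?thesis using assms(2) by (simp add: nth_append)
  qed
  show ?thesis unfolding u_def phi_pow_L
  proof (rule the_equality)
    show "\<exists>N. \<forall>k\<ge>N. i < length (phi_block p k L) \<and> phi_block p k L ! i = phi_block p m L ! i"
      using stable by blast
  next
    fix a
    assume "\<exists>N. \<forall>k\<ge>N. i < length (phi_block p k L) \<and> phi_block p k L ! i = a"
    then obtain N where "\<forall>k\<ge>N. phi_block p k L ! i = a" by blast
    then show "a = phi_block p m L ! i" using stable[of "max N m"] by simp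
  qed
qed

lemma u_shift_length_phi_block_L:
  assumes "p \<ge> 2" "i < length (phi_block p m L)"
  shows "u p (i + length (phi_block p m L)) = u p i"
proof -
  obtain r where r: "phi_block p (Suc m) L = phi_block p m L @ phi_block p m L @ r"
    using phi_block_Suc_L_square_prefix[OF assms(1)] by blast
  have "u p (i + length (phi_block p m L)) = phi_block p (Suc m) L ! (i + length (phi_block p m L))"
    using assms by (intro u_eq_nth_phi_block) (auto simp: r)
  also have "\<dots> = phi_block p m L ! i" using assms(2) by (simp add: r nth_append)
  also have "\<dots> = u p i" using assms by (intro u_eq_nth_phi_block[symmetric]) auto
  finally show ?thesis .
qed

lemma u_0: "p \<ge> 1 \<Longrightarrow> u p 0 = L"
  using u_eq_nth_phi_block[of p 0 0] by simp

lemma u_p: "p \<ge> 1 \<Longrightarrow> u p p = S"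
  using u_eq_nth_phi_block[of p p 1] by (simp add: phi_block_Suc_L nth_append)

lemma u_p_times_Suc_p: "p \<ge> 1 \<Longrightarrow> u p (p * (p + 1)) = M"
  using u_eq_nth_phi_block[of p "p * (p + 1)" 2]
  by (simp add: numeral_2_eq_2 phi_block_Suc_L phi_block_Suc_S nth_append length_concat
      sum_list_replicate)

definition is_period :: "(nat \<Rightarrow> 'a) \<Rightarrow> nat \<Rightarrow> bool" where
  "is_period f t \<longleftrightarrow> (\<forall>i. f (i + t) = f i)"

lemma is_period_mult_shift: "is_period f t \<Longrightarrow> f (i + k * t) = f i"
proof (induction k)
  case (Suc k)
  then have "f ((i + k * t) + t) = f i" by (simp add: is_period_def)
  then show ?case by (simp add: algebra_simps)
qed simp

lemma is_period_mult: "is_period f t \<Longrightarrow> is_period f (t * k)"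
  by (simp add: is_period_def is_period_mult_shift mult.commute)

lemma is_period_diff:
  assumes "is_period f a" "is_period f b" "b \<le> a"
  shows "is_period f (a - b)"
  unfolding is_period_def
proof
  fix i
  have "f (i + (a - b)) = f (i + (a - b) + b)" using assms(2) by (simp add: is_period_def)
  also have "\<dots> = f i" using assms(1,3) by (simp add: is_period_def)
  finally show "f (i + (a - b)) = f i" .
qed

lemma is_period_gcd:
  assumes "is_period f a" "is_period f b" "a \<noteq> 0"
  shows "is_period f (gcd a b)"
proof -
  obtain x y where xy: "a * x = b * y + gcd a b" using bezout_nat[OF assms(3)] by blast
  have "is_period f (a * x - b * y)"
    using xy by (intro is_period_diff is_period_mult assms) simp
  then show ?thesis using xy by simp
qed

lemma is_period_from_window:
  assumes "is_period f n" "0 < n" "n \<le> t" "\<forall>i<t. f (i + t) = f i"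
  shows "is_period f t"
  unfolding is_period_def
proof
  fix i
  have "i mod n < t" using assms(2,3) by (meson mod_less_divisor order_less_le_trans)
  have i: "i = i mod n + (i div n) * n" by simp
  have "f (i + t) = f ((i mod n + t) + (i div n) * n)"
    by (subst i) (simp add: algebra_simps)
  also have "\<dots> = f (i mod n + t)" by (rule is_period_mult_shift[OF assms(1)])
  also have "\<dots> = f (i mod n)" using assms(4) \<open>i mod n < t\<close> by blast
  also have "\<dots> = f i"
    by (subst (2) i) (rule is_period_mult_shift[OF assms(1), symmetric])
  finally show "f (i + t) = f i" .
qed

lemma is_period_1_const: "is_period f 1 \<Longrightarrow> f i = f 0"
  by (induction i) (auto simp: is_period_def)

lemma is_period_comp_u_imp_1:
  assumes "p \<ge> 2" "n \<ge> 1" "is_period (g \<circ> u p) n"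
  shows "is_period (g \<circ> u p) 1"
proof -
  define f where "f = g \<circ> u p"
  define a where "a j = length (phi_block p (n + j) L)" for j
  have period_a: "is_period f (a j)" for j
  proof (rule is_period_from_window)
    show "is_period f n" using assms(3) by (simp add: f_def)
    show "n \<le> a j" using length_phi_block_L_ge[of p "n + j"] assms(1) by (simp add: a_def)
    show "\<forall>i<a j. f (i + a j) = f i"
      using u_shift_length_phi_block_L[OF assms(1)] by (simp add: f_def a_def)
  qed (use assms(2) in simp)
  have "a 0 \<noteq> 0"
    using length_phi_block_pos[of p "n + 0" L] unfolding a_def by linarith
  then have "is_period f (gcd (gcd (a 0) (a 1)) (a 2))"
    by (intro is_period_gcd period_a) simp_all
  moreover have "gcd (gcd (a 0) (a 1)) (a 2) = 1"
    using gcd_length_phi_block_L[of p n] assms(1) by (simp add: a_def)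
  ultimately show ?thesis by (simp add: f_def)
qed

lemma factor_snoc_eq_Cons_factor_Suc:
  "factor p i n @ [u p (i + n)] = u p i # factor p (Suc i) n"
proof -
  have "[i..<i + n] @ [i + n] = [i..<Suc (i + n)]" by simp
  also have "\<dots> = i # [Suc i..<Suc i + n]" by (simp add: upt_rec)
  finally have "map (u p) ([i..<i + n] @ [i + n]) = map (u p) (i # [Suc i..<Suc i + n])"
    by (rule arg_cong)
  then show ?thesis by (simp add: factor_def)
qed

lemma count_list_factor_Suc:
  "count_list (factor p i n) c + (if u p (i + n) = c then 1 else 0)
   = count_list (factor p (Suc i) n) c + (if u p i = c then 1 else 0)"
  using arg_cong[OF factor_snoc_eq_Cons_factor_Suc[of p i n], of "\<lambda>w. count_list w c"]
  by (cases "u p i = c"; cases "u p (i + n) = c") simp_all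

lemma count_list_factor_not_const:
  assumes "p \<ge> 2" "n \<ge> 1"
  shows "\<exists>j. count_list (factor p j n) c \<noteq> K"
proof (rule ccontr)
  assume const_count: "\<nexists>j. count_list (factor p j n) c \<noteq> K"
  have "is_period ((\<lambda>a. a = c) \<circ> u p) n"
    unfolding is_period_def comp_def
  proof
    fix i
    show "(u p (i + n) = c) = (u p i = c)"
      using count_list_factor_Suc[of p i n c] const_count by (auto split: if_splits)
  qed
  then have "is_period ((\<lambda>a. a = c) \<circ> u p) 1" by (rule is_period_comp_u_imp_1[OF assms])
  then have const: "(u p i = c) = (u p 0 = c)" for i
    using is_period_1_const[of "(\<lambda>a. a = c) \<circ> u p" i] by simp
  have "p \<ge> 1" using assms(1) by simp
  then have "u p 0 = L" "u p p = S" "u p (p * (p + 1)) = M"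
    by (rule u_0, rule u_p, rule u_p_times_Suc_p)
  then show False using const[of p] const[of "p * (p + 1)"] by (cases c) simp_all
qed

lemma parikh_eq_imp_count_list_eq: "parikh v = parikh w \<Longrightarrow> count_list v c = count_list w c"
  by (cases c) (simp_all add: parikh_def)

lemma ex_letter_avoiding: "\<exists>c::letter. c \<noteq> x \<and> c \<noteq> y"
  by (cases x; cases y) (meson letter.distinct)+

lemma finite_parikh_factors: "finite {parikh (factor p i n) | i. True}"
proof (rule finite_subset)
  have "count_list (factor p i n) c \<le> n" for i c
    using count_le_length[of "factor p i n" c] by (simp add: factor_def)
  then show "{parikh (factor p i n) | i. True} \<subseteq> {0..n} \<times> {0..n} \<times> {0..n}"
    by (auto simp: parikh_def)
qed simp

lemma three_distinct_parikh_factors: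
  assumes "p \<ge> 2" "n \<ge> 1"
  shows "\<exists>i j. parikh (factor p i n) \<noteq> parikh (factor p (Suc i) n)
    \<and> parikh (factor p j n) \<noteq> parikh (factor p i n)
    \<and> parikh (factor p j n) \<noteq> parikh (factor p (Suc i) n)"
proof -
  define v where "v i = parikh (factor p i n)" for i
  have "\<exists>i. v i \<noteq> v (Suc i)"
  proof (rule ccontr)
    assume "\<nexists>i. v i \<noteq> v (Suc i)"
    then have "v j = v 0" for j by (induction j) auto
    then have "count_list (factor p j n) L = count_list (factor p 0 n) L" for j
      unfolding v_def by (rule parikh_eq_imp_count_list_eq)
    then show False using count_list_factor_not_const[OF assms] by blast
  qed
  then obtain i where i: "v i \<noteq> v (Suc i)" by blast
  obtain c where "c \<noteq> u p i" "c \<noteq> u p (i + n)" using ex_letter_avoiding by blast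
  then have c_Suc: "count_list (factor p (Suc i) n) c = count_list (factor p i n) c"
    using count_list_factor_Suc[of p i n c] by simp
  obtain j where j: "count_list (factor p j n) c \<noteq> count_list (factor p i n) c"
    using count_list_factor_not_const[OF assms] by blast
  have "v j \<noteq> v i" "v j \<noteq> v (Suc i)"
    using j c_Suc parikh_eq_imp_count_list_eq[of "factor p j n" "factor p i n" c]
      parikh_eq_imp_count_list_eq[of "factor p j n" "factor p (Suc i) n" c]
    unfolding v_def by auto
  with i show ?thesis unfolding v_def by blast
qed

theorem proposition8p4:
  fixes p n :: nat
  assumes "p > 1" and "n \<ge> 1"
  shows "AC p n \<ge> 3"
proof -
  have "p \<ge> 2" using assms(1) by simp
  then obtain i j where distinct: "parikh (factor p i n) \<noteq> parikh (factor p (Suc i) n)"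
    "parikh (factor p j n) \<noteq> parikh (factor p i n)"
    "parikh (factor p j n) \<noteq> parikh (factor p (Suc i) n)"
    using three_distinct_parikh_factors assms(2) by blast
  have "{parikh (factor p i n), parikh (factor p (Suc i) n), parikh (factor p j n)}
      \<subseteq> {parikh (factor p k n) | k. True}"
    by blast
  from card_mono[OF finite_parikh_factors this] distinct
  show ?thesis by (simp add: AC_def card_insert_if)
qed

end
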